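(* Let $G$ be a connected cograph which is $k$-connected, and let $S$ be a minimal vertex separator of $G$ with $|S|=k$, so that $G\setminus S$ has connected components $G_1,\ldots,G_m$ with $m\geq 2$. Then every vertex $x\in S$ is adjacent to every vertex of $V(G)\setminus S$.
   Context: A cograph is a graph that can be built from single vertices by repeatedly taking disjoint unions and joins; equivalently, a graph with no induced path on four vertices. Graphs are finite, simple, undirected. $G\setminus S$ is the subgraph induced on $V(G)\setminus S$. A vertex separator of a connected graph $G$ is a set $S\subset V(G)$ such that $G\setminus S$ is disconnected; it is minimal if no proper subset of $S$ is a vertex separator; a minimum vertex separator is a minimal vertex separator of least size. The paper calls $G$ $k$-connected if there exists a minimum vertex separator of size $k$. *)

theory Defs
  imports Main
begin

definition simple_graph :: "'a set \<Rightarrow> ('a \<Rightarrow> 'a \<Rightarrow> bool) \<Rightarrow> bool" where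
  "simple_graph V E \<longleftrightarrow> finite V \<and> (\<forall>x y. E x y \<longrightarrow> x \<in> V \<and> y \<in> V)
     \<and> (\<forall>x y. E x y \<longrightarrow> E y x) \<and> (\<forall>x. \<not> E x x)"

definition reachable_in :: "('a \<Rightarrow> 'a \<Rightarrow> bool) \<Rightarrow> 'a set \<Rightarrow> 'a \<Rightarrow> 'a \<Rightarrow> bool" where
  "reachable_in E U x y \<longleftrightarrow> (\<lambda>a b. a \<in> U \<and> b \<in> U \<and> E a b)\<^sup>*\<^sup>* x y"

definition connected_on :: "('a \<Rightarrow> 'a \<Rightarrow> bool) \<Rightarrow> 'a set \<Rightarrow> bool" where
  "connected_on E U \<longleftrightarrow> U \<noteq> {} \<and> (\<forall>x\<in>U. \<forall>y\<in>U. reachable_in E U x y)"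

definition cograph :: "'a set \<Rightarrow> ('a \<Rightarrow> 'a \<Rightarrow> bool) \<Rightarrow> bool" where
  "cograph V E \<longleftrightarrow> \<not> (\<exists>a\<in>V. \<exists>b\<in>V. \<exists>c\<in>V. \<exists>d\<in>V. distinct [a,b,c,d] \<and>
      E a b \<and> E b c \<and> E c d \<and> \<not> E a c \<and> \<not> E a d \<and> \<not> E b d)"

definition vertex_separator :: "'a set \<Rightarrow> ('a \<Rightarrow> 'a \<Rightarrow> bool) \<Rightarrow> 'a set \<Rightarrow> bool" where
  "vertex_separator V E S \<longleftrightarrow> S \<subseteq> V \<and>
     (\<exists>x\<in>V - S. \<exists>y\<in>V - S. \<not> reachable_in E (V - S) x y)"

definition minimal_vertex_separator :: "'a set \<Rightarrow> ('a \<Rightarrow> 'a \<Rightarrow> bool) \<Rightarrow> 'a set \<Rightarrow> bool" where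
  "minimal_vertex_separator V E S \<longleftrightarrow> vertex_separator V E S \<and>
     (\<forall>T. T \<subset> S \<longrightarrow> \<not> vertex_separator V E T)"

definition minimum_vertex_separator :: "'a set \<Rightarrow> ('a \<Rightarrow> 'a \<Rightarrow> bool) \<Rightarrow> 'a set \<Rightarrow> bool" where
  "minimum_vertex_separator V E S \<longleftrightarrow> minimal_vertex_separator V E S \<and>
     (\<forall>T. minimal_vertex_separator V E T \<longrightarrow> card S \<le> card T)"

text \<open>The paper's notion: G is k-connected if it has a minimum vertex separator of size k.\<close>
definition k_connected :: "'a set \<Rightarrow> ('a \<Rightarrow> 'a \<Rightarrow> bool) \<Rightarrow> nat \<Rightarrow> bool" where
  "k_connected V E k \<longleftrightarrow> (\<exists>S. minimum_vertex_separator V E S \<and> card S = k)"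

end

theory Submission
  imports Defs
begin

text \<open>Let x \<in> S and suppose x is not adjacent to some y \<in> V - S. By minimality, S - {x} does
not separate, so every component of G - S contains a neighbour of x; as G - S has at least
two components, x has a neighbour z outside the component C of y. Walking in C from a
neighbour of x to the non-neighbour y, we meet an edge c1 c2 with c1 adjacent and c2 not
adjacent to x. Then z - x - c1 - c2 is an induced path on four vertices.\<close>

lemma reachable_in_refl: "reachable_in E U a a"
  unfolding reachable_in_def by simp

lemma reachable_in_trans:
  "reachable_in E U a b \<Longrightarrow> reachable_in E U b c \<Longrightarrow> reachable_in E U a c"
  unfolding reachable_in_def by (rule rtranclp_trans)

lemma reachable_in_step:
  "reachable_in E U a b \<Longrightarrow> b \<in> U \<Longrightarrow> c \<in> U \<Longrightarrow> E b c \<Longrightarrow> reachable_in E U a c"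
  unfolding reachable_in_def by (erule rtranclp.rtrancl_into_rtrancl) simp

lemma reachable_in_sym:
  assumes "\<forall>x y. E x y \<longrightarrow> E y x" and "reachable_in E U a b"
  shows "reachable_in E U b a"
proof -
  have "symp (\<lambda>a b. a \<in> U \<and> b \<in> U \<and> E a b)"
    using assms(1) by (auto intro: sympI)
  then show ?thesis
    using assms(2) unfolding reachable_in_def by (meson sympD symp_rtranclp)
qed

lemma reachable_in_closed: "reachable_in E U a b \<Longrightarrow> a \<in> U \<Longrightarrow> b \<in> U"
  unfolding reachable_in_def by (induction rule: rtranclp.induct) auto

lemma not_reachable_in_not_adjacent:
  assumes "reachable_in E U a b" and "\<not> reachable_in E U a c" and "b \<in> U" and "c \<in> U"
  shows "\<not> E b c"
  using reachable_in_step[OF assms(1,3,4)] assms(2) by blast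

lemma reachable_in_insert_cases:
  assumes "reachable_in E (insert x W) u v" and "u \<in> W"
  shows "(\<exists>w. reachable_in E W u w \<and> E w x) \<or> (v \<in> W \<and> reachable_in E W u v)"
proof -
  have "(\<lambda>a b. a \<in> insert x W \<and> b \<in> insert x W \<and> E a b)\<^sup>*\<^sup>* u v"
    using assms(1) unfolding reachable_in_def .
  then show ?thesis
  proof (induction rule: rtranclp_induct)
    case base
    then show ?case using assms(2) by (auto intro: reachable_in_refl)
  next
    case (step b c)
    then show ?case by (metis insertE reachable_in_step)
  qed
qed

lemma minimal_vertex_separator_reaches_neighbour:
  assumes sym: "\<forall>x y. E x y \<longrightarrow> E y x"
    and min: "minimal_vertex_separator V E S" and "x \<in> S" and u: "u \<in> V - S"
  shows "\<exists>w. reachable_in E (V - S) u w \<and> E x w"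
proof -
  have "S \<subseteq> V"
    using min unfolding minimal_vertex_separator_def vertex_separator_def by simp
  moreover have "\<not> vertex_separator V E (S - {x})"
    using min \<open>x \<in> S\<close> unfolding minimal_vertex_separator_def by blast
  ultimately have connected: "\<forall>p\<in>V - (S - {x}). \<forall>q\<in>V - (S - {x}). reachable_in E (V - (S - {x})) p q"
    unfolding vertex_separator_def by blast
  have "V - (S - {x}) = insert x (V - S)"
    using \<open>x \<in> S\<close> \<open>S \<subseteq> V\<close> by auto
  with connected u have "reachable_in E (insert x (V - S)) u x"
    by simp
  then have "\<exists>w. reachable_in E (V - S) u w \<and> E w x"
    using reachable_in_insert_cases[OF _ u] \<open>x \<in> S\<close> by blast
  then show ?thesis
    using sym by blast
qed

lemma neighbour_in_other_component:
  assumes sym: "\<forall>x y. E x y \<longrightarrow> E y x"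
    and "a \<in> W" and "b \<in> W" and "\<not> reachable_in E W a b"
    and nbr: "\<forall>u\<in>W. \<exists>w. reachable_in E W u w \<and> E x w"
  shows "\<exists>z\<in>W. \<not> reachable_in E W y z \<and> E x z"
proof -
  obtain c where "c \<in> W" and yc: "\<not> reachable_in E W y c"
  proof (cases "reachable_in E W y a")
    case True
    then have "\<not> reachable_in E W y b"
      using assms(4) reachable_in_trans[OF reachable_in_sym[OF sym True]] by blast
    then show ?thesis using that \<open>b \<in> W\<close> by blast
  next
    case False
    then show ?thesis using that \<open>a \<in> W\<close> by blast
  qed
  then obtain z where cz: "reachable_in E W c z" and "E x z"
    using nbr by blast
  have "z \<in> W"
    using reachable_in_closed[OF cz \<open>c \<in> W\<close>] .
  moreover have "\<not> reachable_in E W y z"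
    using yc reachable_in_trans[OF _ reachable_in_sym[OF sym cz]] by blast
  ultimately show ?thesis using \<open>E x z\<close> by blast
qed

lemma reachable_in_leaves_neighbourhood:
  assumes "reachable_in E W w v" and "E x w" and "\<not> E x v"
  shows "\<exists>c\<^sub>1 c\<^sub>2. reachable_in E W w c\<^sub>1 \<and> c\<^sub>1 \<in> W \<and> c\<^sub>2 \<in> W \<and> E x c\<^sub>1 \<and> E c\<^sub>1 c\<^sub>2 \<and> \<not> E x c\<^sub>2"
proof -
  have "(\<lambda>a b. a \<in> W \<and> b \<in> W \<and> E a b)\<^sup>*\<^sup>* w v"
    using assms(1) unfolding reachable_in_def .
  then have "E x v \<or> (\<exists>c\<^sub>1 c\<^sub>2. reachable_in E W w c\<^sub>1 \<and> c\<^sub>1 \<in> W \<and> c\<^sub>2 \<in> W \<and> E x c\<^sub>1 \<and> E c\<^sub>1 c\<^sub>2 \<and> \<not> E x c\<^sub>2)"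
  proof (induction rule: rtranclp_induct)
    case base
    then show ?case using assms(2) by simp
  next
    case (step b c)
    then have "reachable_in E W w b"
      unfolding reachable_in_def by simp
    then show ?case using step by blast
  qed
  then show ?thesis using assms(3) by blast
qed

lemma cograph_adjacent_to_component:
  assumes "simple_graph V E" and "cograph V E" and "W \<subseteq> V" and "x \<in> V - W"
    and z: "z \<in> W" "\<not> reachable_in E W y z" "E x z"
    and yw: "reachable_in E W y w" and "E x w"
  shows "E x y"
proof (rule ccontr)
  assume "\<not> E x y"
  have sym: "\<forall>x y. E x y \<longrightarrow> E y x" and irrefl: "\<forall>x. \<not> E x x"
    using assms(1) unfolding simple_graph_def by auto
  obtain c\<^sub>1 c\<^sub>2 where c: "reachable_in E W w c\<^sub>1" "c\<^sub>1 \<in> W" "c\<^sub>2 \<in> W"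
      "E x c\<^sub>1" "E c\<^sub>1 c\<^sub>2" "\<not> E x c\<^sub>2"
    using reachable_in_leaves_neighbourhood[OF reachable_in_sym[OF sym yw]] \<open>E x w\<close> \<open>\<not> E x y\<close>
    by blast
  have yc\<^sub>1: "reachable_in E W y c\<^sub>1"
    using reachable_in_trans[OF yw c(1)] .
  have yc\<^sub>2: "reachable_in E W y c\<^sub>2"
    using reachable_in_step[OF yc\<^sub>1 c(2,3,5)] .
  have "\<not> E z c\<^sub>1" "\<not> E z c\<^sub>2"
    using not_reachable_in_not_adjacent[OF yc\<^sub>1 z(2) c(2) z(1)]
      not_reachable_in_not_adjacent[OF yc\<^sub>2 z(2) c(3) z(1)] sym by blast+
  moreover have "E z x"
    using z(3) sym by blast
  moreover have "distinct [z, x, c\<^sub>1, c\<^sub>2]"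
    using z yc\<^sub>1 yc\<^sub>2 c(2,3,5) \<open>x \<in> V - W\<close> irrefl by auto
  moreover have "z \<in> V" "x \<in> V" "c\<^sub>1 \<in> V" "c\<^sub>2 \<in> V"
    using z(1) c(2,3) \<open>x \<in> V - W\<close> \<open>W \<subseteq> V\<close> by auto
  ultimately show False
    using assms(2) c(4-6) unfolding cograph_def by blast
qed

theorem lemma2:
  fixes V :: "'a set" and E :: "'a \<Rightarrow> 'a \<Rightarrow> bool" and S :: "'a set" and k :: nat
  assumes "simple_graph V E"
    and "cograph V E"
    and "connected_on E V"
    and "k_connected V E k"
    and "minimal_vertex_separator V E S"
    and "card S = k"
  shows "\<forall>x\<in>S. \<forall>y\<in>V - S. E x y"
proof (intro ballI)
  fix x y assume "x \<in> S" and y: "y \<in> V - S"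
  have sym: "\<forall>x y. E x y \<longrightarrow> E y x"
    using assms(1) unfolding simple_graph_def by auto
  have sep: "vertex_separator V E S"
    using assms(5) unfolding minimal_vertex_separator_def by simp
  then have "S \<subseteq> V"
    unfolding vertex_separator_def by simp
  obtain a b where "a \<in> V - S" "b \<in> V - S" "\<not> reachable_in E (V - S) a b"
    using sep unfolding vertex_separator_def by blast
  have nbr: "\<forall>u\<in>V - S. \<exists>w. reachable_in E (V - S) u w \<and> E x w"
    using minimal_vertex_separator_reaches_neighbour[OF sym assms(5) \<open>x \<in> S\<close>] by blast
  then obtain z where "z \<in> V - S" "\<not> reachable_in E (V - S) y z" "E x z"
    using neighbour_in_other_component[OF sym \<open>a \<in> V - S\<close> \<open>b \<in> V - S\<close> _ nbr]
      \<open>\<not> reachable_in E (V - S) a b\<close> by blast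
  moreover obtain w where "reachable_in E (V - S) y w" "E x w"
    using nbr y by blast
  moreover have "x \<in> V - (V - S)"
    using \<open>x \<in> S\<close> \<open>S \<subseteq> V\<close> by blast
  ultimately show "E x y"
    using cograph_adjacent_to_component[OF assms(1,2)] by blast
qed

end
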